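(* Let $R=k[[t^6,t^7,t^{15}]]$ and $x=t^6+t^7$. Then $v(m^3+xR)\not\subseteq v(m^3)\cup v(xR)$; more precisely $22\in v(m^3+xR)$ but $22\notin v(m^3)\cup v(xR)$. Consequently the $m$-adic filtration of $R$ is not essentially divisible with respect to the minimal reduction $(t^6+t^7)R$, although it is essentially divisible with respect to $t^6R$.
   Context: $k$ is a field, $R=k[[t^6,t^7,t^{15}]]\subseteq k[[t]]$ with maximal ideal $m$, $v$ the $t$-adic valuation, and for a nonzero ideal $I$, $v(I)=\{v(a):a\in I,a\ne0\}$. For $a\in R$, $\operatorname{ord}(a)=\max\{i: a\in m^i\}$; for $s\in v(R)$, $\operatorname{vord}(s)=\max\{i: s\in v(m^i)\}$. For $x\in R$ with $v(x)=6$ (the multiplicity), the $m$-adic filtration is essentially divisible with respect to $xR$ if for every $u\in v(xR)$ there is $a\in xR$ with $v(a)=u$ and $\operatorname{ord}(a)=\operatorname{vord}(u)$. *)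

theory Defs
  imports "HOL-Computational_Algebra.Formal_Power_Series"
begin

definition Sgp :: "nat set" where
  "Sgp = {6*a + 7*b + 15*c | a b c. True}"

text \<open>R = k[[t^6,t^7,t^15]] inside k[[t]]: the power series supported on the semigroup
  (the closure of the span of the monomials t^s, s in the semigroup).\<close>
definition Rring :: "'a::field fps set" where
  "Rring = {f. \<forall>n. fps_nth f n \<noteq> 0 \<longrightarrow> n \<in> Sgp}"

definition mideal :: "'a::field fps set" where
  "mideal = {f \<in> Rring. fps_nth f 0 = 0}"

inductive_set ideal_prod :: "'a::field fps set \<Rightarrow> 'a fps set \<Rightarrow> 'a fps set"
  for I J where
  zero: "0 \<in> ideal_prod I J"
| prod: "a \<in> I \<Longrightarrow> b \<in> J \<Longrightarrow> a * b \<in> ideal_prod I J"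
| add: "x \<in> ideal_prod I J \<Longrightarrow> y \<in> ideal_prod I J \<Longrightarrow> x + y \<in> ideal_prod I J"

fun mpow :: "nat \<Rightarrow> 'a::field fps set" where
  "mpow 0 = Rring"
| "mpow (Suc i) = ideal_prod mideal (mpow i)"

definition principal :: "'a::field fps \<Rightarrow> 'a fps set" where
  "principal x = {x * r | r. r \<in> Rring}"

definition ideal_sum :: "'a::field fps set \<Rightarrow> 'a fps set \<Rightarrow> 'a fps set" where
  "ideal_sum I J = {a + b | a b. a \<in> I \<and> b \<in> J}"

definition vals :: "'a::field fps set \<Rightarrow> nat set" where
  "vals I = {subdegree a | a. a \<in> I \<and> a \<noteq> 0}"

definition ordm :: "'a::field fps \<Rightarrow> nat" where
  "ordm a = (GREATEST i. a \<in> (mpow i :: 'a fps set))"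

definition vordm :: "'a::field itself \<Rightarrow> nat \<Rightarrow> nat" where
  "vordm _ s = (GREATEST i. s \<in> vals (mpow i :: 'a fps set))"

definition ess_divisible :: "'a::field fps \<Rightarrow> bool" where
  "ess_divisible x = (\<forall>u \<in> vals (principal x).
     \<exists>a \<in> principal x. a \<noteq> 0 \<and> subdegree a = u \<and> ordm a = vordm TYPE('a) u)"

end

theory Submission imports Defs begin

(*
  R = k[[t^6,t^7,t^15]] is a monomial ring, so every power m^i of its
  maximal ideal is "monomial": a power series lies in m^i only if all its exponents lie
  in the set Mexp i of sums of i nonzero semigroup elements plus one semigroup element,
  and conversely every scalar multiple of t^n with n in Mexp i lies in m^i.  Hence
  v(m^i) = Mexp i, ord(t^u) = vord(u), and the filtration is essentially divisible with
  respect to every monomial principal ideal t^e R, in particular t^6 R.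
  For x = t^6 + t^7 we have t^22 = x t^15 - t^21 in m^3 + xR (as 21 = 7+7+7), whereas
  22 is not in Mexp 3 and 22 - 6 = 16 is a gap of the semigroup, so 22 is neither in
  v(m^3) nor in v(xR).
  Finally, any a = x r with v(a) = 21 has v(r) = 15, hence r has no t^16 term and a has
  a nonzero t^22 term; this forces ord(a) < 3 = vord(21), so essential divisibility
  fails for xR.
*)

section \<open>The semigroup generated by 6, 7 and 15\<close>

lemma Sgp_lincomb: "6*a + 7*b + 15*c \<in> Sgp"
  unfolding Sgp_def by blast

lemma Sgp_0: "0 \<in> Sgp" and Sgp_6: "6 \<in> Sgp" and Sgp_7: "7 \<in> Sgp" and Sgp_15: "15 \<in> Sgp"
  using Sgp_lincomb[of 0 0 0] Sgp_lincomb[of 1 0 0] Sgp_lincomb[of 0 1 0] Sgp_lincomb[of 0 0 1]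
  by simp_all

lemma Sgp_small:
  assumes "n \<in> Sgp" shows "n = 0 \<or> n = 6 \<or> n = 7 \<or> 12 \<le> n"
proof -
  obtain a b c where n: "n = 6*a + 7*b + 15*c" using assms unfolding Sgp_def by blast
  show ?thesis
  proof (cases "1 \<le> c \<or> 2 \<le> a + b")
    case True then show ?thesis using n by linarith
  next
    case False
    then have "c = 0" "(a = 0 \<and> b = 0) \<or> (a = 1 \<and> b = 0) \<or> (a = 0 \<and> b = 1)" by auto
    then show ?thesis using n by auto
  qed
qed

lemma Sgp_nonzero_ge: "n \<in> Sgp \<Longrightarrow> n \<noteq> 0 \<Longrightarrow> 6 \<le> n"
  using Sgp_small[of n] by linarith

text \<open>16 is a gap of the semigroup; this is what makes \<open>t^6 + t^7\<close> behave badly.\<close>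
lemma Sgp_16: "16 \<notin> Sgp"
proof
  assume "16 \<in> Sgp"
  then obtain a b c :: nat where h: "16 = 6*a + 7*b + 15*c" unfolding Sgp_def by blast
  then have "c \<le> 1" "a \<le> 2" "b \<le> 2" by linarith+
  then have "c \<in> {0,1}" "a \<in> {0,1,2}" "b \<in> {0,1,2}" by auto
  then show False using h by auto
qed

lemma monomial_in_Rring: "n \<in> Sgp \<Longrightarrow> (fps_X ^ n :: 'a::field fps) \<in> Rring"
  by (simp add: Rring_def)

lemma monomial_in_vals: "(fps_X ^ n :: 'a::field fps) \<in> I \<Longrightarrow> n \<in> vals I"
  unfolding vals_def by (intro CollectI exI[of _ "fps_X ^ n"]) (simp add: fps_X_power_subdegree)

lemma subdegree_in_Sgp:
  assumes "(r :: 'a::field fps) \<in> Rring" "r \<noteq> 0" shows "subdegree r \<in> Sgp"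
  using assms nth_subdegree_nonzero[of r] unfolding Rring_def by blast

lemma Rring_nth_16: "(r :: 'a::field fps) \<in> Rring \<Longrightarrow> fps_nth r 16 = 0"
  using Sgp_16 unfolding Rring_def by blast

lemma mult_in_principal: "r \<in> Rring \<Longrightarrow> x * r \<in> principal (x :: 'a::field fps)"
  unfolding principal_def by blast

lemma vals_principal:
  "u \<in> vals (principal x) \<longleftrightarrow> (\<exists>r \<in> Rring. x * r \<noteq> 0 \<and> subdegree (x * r) = u)"
  unfolding vals_def principal_def by auto

section \<open>Powers of the maximal ideal are monomial\<close>

text \<open>\<open>Mexp i\<close>: the exponents of the monomials of \<open>m^i\<close>, i.e. the sums of \<open>i\<close>
  nonzero semigroup elements and one further semigroup element.\<close>
fun Mexp :: "nat \<Rightarrow> nat set" where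
  "Mexp 0 = Sgp"
| "Mexp (Suc i) = {a + b | a b. a \<in> Sgp \<and> a \<noteq> 0 \<and> b \<in> Mexp i}"

text \<open>\<open>m^i\<close> starts in degree \<open>6i\<close>; this bounds ord and vord of a given value.\<close>
lemma Mexp_ge: "n \<in> Mexp i \<Longrightarrow> 6 * i \<le> n"
proof (induction i arbitrary: n)
  case (Suc i)
  then obtain a b where "n = a + b" "a \<in> Sgp" "a \<noteq> 0" "b \<in> Mexp i" by auto
  moreover from this have "6 \<le> a" "6 * i \<le> b" using Sgp_nonzero_ge Suc.IH by blast+
  ultimately show ?case by simp
qed simp

lemma Mexp_SucI: "a \<in> Sgp \<Longrightarrow> a \<noteq> 0 \<Longrightarrow> b \<in> Mexp i \<Longrightarrow> a + b \<in> Mexp (Suc i)"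
  by auto

text \<open>\<open>21 = 7 + 7 + 7\<close>, so \<open>t^21 \<in> m^3\<close>.\<close>
lemma Mexp_21: "21 \<in> Mexp 3"
proof -
  have "7 + (7 + (7 + 0)) \<in> Mexp (Suc (Suc (Suc 0)))"
    using Sgp_7 Sgp_0 by (intro Mexp_SucI) simp_all
  then show ?thesis by (simp add: numeral_3_eq_3)
qed

text \<open>22 is not a sum of three nonzero semigroup elements and a semigroup element:
  each summand is at least 6, so the three are all 6 or 7 and the fourth is 0.\<close>
lemma Mexp_22: assumes "3 \<le> i" shows "22 \<notin> Mexp i"
proof
  assume in22: "22 \<in> Mexp i"
  show False
  proof (cases "i = 3")
    case True
    then obtain a1 a2 a3 d where h: "22 = a1 + (a2 + (a3 + d))" "a1 \<in> Sgp" "a1 \<noteq> 0"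
      "a2 \<in> Sgp" "a2 \<noteq> 0" "a3 \<in> Sgp" "a3 \<noteq> 0" "d \<in> Sgp"
      using in22 by (auto simp: numeral_3_eq_3)
    then have "6 \<le> a1" "6 \<le> a2" "6 \<le> a3" by (auto intro: Sgp_nonzero_ge)
    then have "a1 \<le> 10" "a2 \<le> 10" "a3 \<le> 10" "d \<le> 4" using h(1) by linarith+
    then have "a1 \<le> 7" "a2 \<le> 7" "a3 \<le> 7" "d = 0"
      using h Sgp_small by fastforce+
    then show False using h(1) by linarith
  next
    case False
    then show False using assms Mexp_ge[OF in22] by linarith
  qed
qed

lemma fps_mult_nth_nonzero:
  fixes a b :: "'a::field fps"
  assumes "fps_nth (a * b) n \<noteq> 0"
  obtains k where "k \<le> n" "fps_nth a k \<noteq> 0" "fps_nth b (n - k) \<noteq> 0"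
proof -
  obtain k where "k \<in> {0..n}" "fps_nth a k * fps_nth b (n - k) \<noteq> 0"
    using assms unfolding fps_mult_nth by (meson sum.neutral)
  then show ?thesis using that by simp
qed

lemma support_mpow: "(f :: 'a::field fps) \<in> mpow i \<Longrightarrow> fps_nth f n \<noteq> 0 \<Longrightarrow> n \<in> Mexp i"
proof (induction i arbitrary: f n)
  case 0 then show ?case by (auto simp: Rring_def)
next
  case (Suc i)
  from Suc.prems(1) have "f \<in> ideal_prod mideal (mpow i)" by simp
  then show ?case using Suc.prems(2)
  proof (induction arbitrary: n)
    case zero then show ?case by simp
  next
    case (prod a b)
    then obtain k where k: "k \<le> n" "fps_nth a k \<noteq> 0" "fps_nth b (n - k) \<noteq> 0"
      by (auto elim: fps_mult_nth_nonzero)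
    with prod.hyps have "k \<in> Sgp" "n - k \<in> Mexp i"
      using Suc.IH unfolding mideal_def Rring_def by auto
    moreover have "k \<noteq> 0" using k(2) prod.hyps(1) unfolding mideal_def by (cases k) auto
    moreover have "n = k + (n - k)" using k by simp
    ultimately show ?case by auto
  next
    case (add x y)
    then show ?case by (cases "fps_nth x n = 0") auto
  qed
qed

lemma monomial_in_mpow:
  "n \<in> Mexp i \<Longrightarrow> fps_const (c::'a::field) * fps_X ^ n \<in> mpow i"
proof (induction i arbitrary: n)
  case 0 then show ?case by (simp add: Rring_def)
next
  case (Suc i)
  then obtain a b where "n = a + b" "a \<in> Sgp" "a \<noteq> 0" "b \<in> Mexp i" by auto
  moreover from this have "fps_X ^ a \<in> (mideal :: 'a fps set)"
    by (simp add: mideal_def Rring_def)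
  ultimately have "fps_X ^ a * (fps_const c * fps_X ^ b) \<in> mpow (Suc i)"
    using Suc.IH by (auto intro: ideal_prod.prod)
  then show ?case by (simp add: \<open>n = a + b\<close> power_add mult.left_commute)
qed

lemma monomial_in_mpow_iff: "(fps_X ^ n :: 'a::field fps) \<in> mpow i \<longleftrightarrow> n \<in> Mexp i"
  using support_mpow[of "fps_X ^ n :: 'a fps" i n] monomial_in_mpow[of n i "1::'a"] by auto

lemma vals_mpow: "vals (mpow i :: 'a::field fps set) = Mexp i"
proof
  show "vals (mpow i :: 'a fps set) \<subseteq> Mexp i"
    unfolding vals_def using support_mpow nth_subdegree_nonzero by blast
  show "Mexp i \<subseteq> vals (mpow i :: 'a fps set)"
  proof
    fix n assume "n \<in> Mexp i"
    then have "fps_X ^ n \<in> (mpow i :: 'a fps set)" by (simp add: monomial_in_mpow_iff)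
    then show "n \<in> vals (mpow i :: 'a fps set)" by (rule monomial_in_vals)
  qed
qed

text \<open>If \<open>a \<in> m^j\<close> has a nonzero coefficient at \<open>n\<close>, the greatest \<open>i\<close> with \<open>a \<in> m^i\<close> exists
  (it is bounded by \<open>n/6\<close>), and then \<open>n \<in> Mexp (ord a)\<close>.\<close>
lemma ordm_exponent:
  fixes a :: "'a::field fps"
  assumes "a \<in> mpow j" "fps_nth a n \<noteq> 0"
  shows "n \<in> Mexp (ordm a)"
proof -
  have "a \<in> mpow (ordm a)"
    unfolding ordm_def
  proof (rule GreatestI_nat[where P = "\<lambda>i. a \<in> mpow i" and b = n])
    show "a \<in> mpow j" by (rule assms(1))
    fix i assume "a \<in> mpow i"
    then show "i \<le> n" using Mexp_ge support_mpow assms(2) by fastforce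
  qed
  then show ?thesis using support_mpow assms(2) by blast
qed

text \<open>\<open>vord(21) = 3\<close>: 21 lies in \<open>Mexp 3\<close> but not in any \<open>Mexp i\<close> with \<open>6i > 21\<close>.\<close>
lemma vordm_21: "vordm TYPE('a::field) 21 = 3"
  unfolding vordm_def vals_mpow
proof (rule Greatest_equality)
  show "21 \<in> Mexp 3" by (rule Mexp_21)
  fix i assume "(21::nat) \<in> Mexp i"
  then show "i \<le> 3" using Mexp_ge by fastforce
qed

text \<open>For monomials, ord and vord agree, because \<open>t^u \<in> m^i \<longleftrightarrow> u \<in> v(m^i)\<close>.\<close>
lemma ordm_monomial: "ordm (fps_X ^ u :: 'a::field fps) = vordm TYPE('a) u"
  unfolding ordm_def vordm_def vals_mpow monomial_in_mpow_iff ..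

text \<open>The \<open>m\<close>-adic filtration is essentially divisible with respect to any monomial
  principal ideal \<open>t^e R\<close>: each value is attained by a monomial.\<close>
lemma ess_divisible_monomial: "ess_divisible (fps_X ^ e :: 'a::field fps)"
  unfolding ess_divisible_def
proof
  fix u assume "u \<in> vals (principal (fps_X ^ e :: 'a fps))"
  then obtain r :: "'a fps" where r: "r \<in> Rring" "fps_X ^ e * r \<noteq> 0" "u = subdegree (fps_X ^ e * r)"
    unfolding vals_principal by blast
  then have "r \<noteq> 0" "u = e + subdegree r" by (auto simp: fps_X_power_subdegree)
  then have "subdegree r \<in> Sgp" using r(1) by (intro subdegree_in_Sgp)
  then have "fps_X ^ e * fps_X ^ subdegree r \<in> principal (fps_X ^ e :: 'a fps)"
    by (intro mult_in_principal monomial_in_Rring)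
  then have "fps_X ^ u \<in> principal (fps_X ^ e :: 'a fps)" by (simp add: \<open>u = e + subdegree r\<close> power_add)
  moreover have "fps_X ^ u \<noteq> (0 :: 'a fps)" "subdegree (fps_X ^ u :: 'a fps) = u"
    by (simp_all add: fps_X_power_subdegree)
  ultimately show "\<exists>a\<in>principal (fps_X ^ e :: 'a fps). a \<noteq> 0 \<and> subdegree a = u \<and> ordm a = vordm TYPE('a) u"
    using ordm_monomial[of u, where 'a='a] by metis
qed

section \<open>The element \<open>x = t^6 + t^7\<close>\<close>

lemma x_in_mideal: "(fps_X ^ 6 + fps_X ^ 7 :: 'a::field fps) \<in> mideal"
  unfolding mideal_def Rring_def using Sgp_6 Sgp_7 by auto

lemma subdegree_x: "subdegree (fps_X ^ 6 + fps_X ^ 7 :: 'a::field fps) = 6"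
  by (rule subdegreeI) auto

lemma x_nonzero: "(fps_X ^ 6 + fps_X ^ 7 :: 'a::field fps) \<noteq> 0"
  using subdegree_x by (metis subdegree_0 zero_neq_numeral)

lemma subdegree_x_mult:
  assumes "(r :: 'a::field fps) \<noteq> 0"
  shows "subdegree ((fps_X ^ 6 + fps_X ^ 7) * r) = 6 + subdegree r"
  using subdegree_mult[OF x_nonzero assms] subdegree_x[where 'a='a] by simp

lemma x_mult_nth22:
  "fps_nth ((fps_X ^ 6 + fps_X ^ 7) * r) 22 = fps_nth r 16 + fps_nth (r::'a::field fps) 15"
  by (simp add: distrib_right fps_X_power_mult_nth)

text \<open>The element of \<open>xR\<close> realizing the value 21 has the extra term \<open>t^22\<close>.\<close>
lemma x_times_t15: "(fps_X ^ 6 + fps_X ^ 7) * fps_X ^ 15 = fps_X ^ 21 + (fps_X ^ 22 :: 'a::field fps)"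
  by (simp add: distrib_right power_add[symmetric])

text \<open>\<open>t^22 = x t^15 - t^21\<close> with \<open>t^21 \<in> m^3\<close>, so \<open>22 \<in> v(m^3 + xR)\<close>.\<close>
lemma val22_in_sum: "22 \<in> vals (ideal_sum (mpow 3) (principal (fps_X ^ 6 + fps_X ^ 7 :: 'a::field fps)))"
proof -
  let ?x = "fps_X ^ 6 + fps_X ^ 7 :: 'a fps"
  have neg: "fps_const (-1) * fps_X ^ 21 = - (fps_X ^ 21 :: 'a fps)"
    by (metis fps_const_neg fps_const_1_eq_1 mult_minus1)
  have "fps_const (-1) * fps_X ^ 21 \<in> (mpow 3 :: 'a fps set)"
    by (rule monomial_in_mpow[OF Mexp_21])
  then have "- (fps_X ^ 21) \<in> (mpow 3 :: 'a fps set)" by (simp only: neg)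
  moreover have "?x * fps_X ^ 15 \<in> principal ?x"
    by (intro mult_in_principal monomial_in_Rring Sgp_15)
  ultimately have "- (fps_X ^ 21) + ?x * fps_X ^ 15 \<in> ideal_sum (mpow 3) (principal ?x)"
    unfolding ideal_sum_def by blast
  moreover have "- (fps_X ^ 21) + ?x * fps_X ^ 15 = fps_X ^ 22"
    by (simp add: x_times_t15)
  ultimately show ?thesis by (simp add: monomial_in_vals)
qed

lemma val22_notin_mpow3: "22 \<notin> vals (mpow 3 :: 'a::field fps set)"
  unfolding vals_mpow using Mexp_22[of 3] by simp

text \<open>Values of \<open>xR\<close> are \<open>6 + v(r)\<close> with \<open>v(r)\<close> in the semigroup, and 16 is a gap.\<close>
lemma val22_notin_principal_x: "22 \<notin> vals (principal (fps_X ^ 6 + fps_X ^ 7 :: 'a::field fps))"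
proof
  assume "22 \<in> vals (principal (fps_X ^ 6 + fps_X ^ 7 :: 'a fps))"
  then obtain r :: "'a fps" where r: "r \<in> Rring" "(fps_X ^ 6 + fps_X ^ 7) * r \<noteq> 0"
      "subdegree ((fps_X ^ 6 + fps_X ^ 7) * r) = 22"
    unfolding vals_principal by blast
  then have "r \<noteq> 0" by auto
  then have "subdegree r = 16" using r(3) subdegree_x_mult[of r] by simp
  then have "16 \<in> Sgp" using subdegree_in_Sgp[OF r(1) \<open>r \<noteq> 0\<close>] by simp
  with Sgp_16 show False by contradiction
qed

text \<open>Every \<open>a \<in> xR\<close> with \<open>v(a) = 21\<close> has \<open>ord(a) < 3 = vord(21)\<close>.\<close>
lemma not_ess_divisible_x: "\<not> ess_divisible (fps_X ^ 6 + fps_X ^ 7 :: 'a::field fps)"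
proof
  let ?x = "fps_X ^ 6 + fps_X ^ 7 :: 'a fps"
  assume ess: "ess_divisible ?x"
  have "fps_X ^ 15 \<in> (Rring :: 'a fps set)" by (rule monomial_in_Rring[OF Sgp_15])
  moreover have "subdegree (?x * fps_X ^ 15) = 21"
    using subdegree_x_mult[of "fps_X ^ 15 :: 'a fps"] by (simp add: fps_X_power_subdegree)
  moreover have "?x * fps_X ^ 15 \<noteq> 0" using x_nonzero by simp
  ultimately have "21 \<in> vals (principal ?x)" unfolding vals_principal by blast
  then obtain a where a: "a \<in> principal ?x" "a \<noteq> 0" "subdegree a = 21"
    "ordm a = vordm TYPE('a) 21" using ess unfolding ess_divisible_def by blast
  then obtain r where r: "r \<in> Rring" "a = ?x * r" "r \<noteq> 0" unfolding principal_def by auto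
  then have "subdegree r = 15" using a(3) subdegree_x_mult[OF r(3)] by simp
  then have "fps_nth r 15 \<noteq> 0" "fps_nth r 16 = 0"
    using r(1,3) nth_subdegree_nonzero[of r] Rring_nth_16 by auto
  then have a22: "fps_nth a 22 \<noteq> 0" using x_mult_nth22[of r] r(2) by simp
  have "a \<in> mpow (Suc 0)"
    unfolding mpow.simps r(2) by (rule ideal_prod.prod[OF x_in_mideal r(1)])
  then have "22 \<in> Mexp (ordm a)" using ordm_exponent a22 by blast
  then have "ordm a < 3" using Mexp_22 not_less by blast
  then show False using a(4) vordm_21[where 'a='a] by simp
qed

theorem mainTheorem10:
  fixes x :: "'a::field fps"
  assumes "x = fps_X ^ 6 + fps_X ^ 7"
  shows "\<not> vals (ideal_sum (mpow 3) (principal x)) \<subseteq> vals (mpow 3 :: 'a fps set) \<union> vals (principal x)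
    \<and> 22 \<in> vals (ideal_sum (mpow 3) (principal x))
    \<and> 22 \<notin> vals (mpow 3 :: 'a fps set) \<union> vals (principal x)
    \<and> \<not> ess_divisible x
    \<and> ess_divisible (fps_X ^ 6 :: 'a fps)"
  using val22_in_sum[where 'a='a] val22_notin_mpow3[where 'a='a]
    val22_notin_principal_x[where 'a='a] not_ess_divisible_x[where 'a='a]
    ess_divisible_monomial[of 6]
  unfolding assms by blast

end
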